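(* Let $G$ be a finite simple graph and let $\{a,b\}$ be an edge of $G$. Then \[I(G)^{[2]}:ab = I(G-\{a,b\})+\big(cd \;:\; c\in N_G(a),\ d\in N_G(b),\ c\neq d,\ c,d\notin\{a,b\}\big).\] In particular, $I(G)^{[2]}:ab$ is the edge ideal of a graph.
   Context: $G$ is a finite simple graph on vertex set $\{x_1,\ldots,x_n\}$, identified with the variables of $S=K[x_1,\ldots,x_n]$ ($K$ a field); edges are identified with the corresponding degree-2 monomials. $I(G)$ is the edge ideal, generated by the monomials $x_ix_j$ with $\{x_i,x_j\}\in E(G)$. $I(G)^{[2]}$ is the ideal generated by all products $e_1e_2$ where $e_1,e_2$ are disjoint edges of $G$. $N_G(x)$ is the set of neighbours of $x$ in $G$. For $W\subseteq V(G)$, $G-W$ denotes the induced subgraph of $G$ on $V(G)\setminus W$. *)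

theory Defs
  imports "HOL-Library.Poly_Mapping"
begin

text \<open>Polynomial ring K[x_v : v in 'v]: finitely supported maps from monomials
  (finitely supported exponent vectors) to coefficients; multiplication is convolution.\<close>
type_synonym ('v, 'k) mpoly = "('v \<Rightarrow>\<^sub>0 nat) \<Rightarrow>\<^sub>0 'k"

definition var :: "'v \<Rightarrow> ('v, 'k::comm_ring_1) mpoly" where
  "var v = Poly_Mapping.single (Poly_Mapping.single v 1) 1"

definition ideal_gen :: "('v, 'k::comm_ring_1) mpoly set \<Rightarrow> ('v, 'k) mpoly set" where
  "ideal_gen S = {p. \<exists>F c. finite F \<and> F \<subseteq> S \<and> p = (\<Sum>f\<in>F. c f * f)}"

definition colon :: "('v, 'k::comm_ring_1) mpoly set \<Rightarrow> ('v, 'k) mpoly \<Rightarrow> ('v, 'k) mpoly set" where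
  "colon I f = {p. p * f \<in> I}"

definition simple_graph :: "'v set set \<Rightarrow> bool" where
  "simple_graph E \<longleftrightarrow> (\<forall>e\<in>E. card e = 2)"

definition edge_mon :: "'v set \<Rightarrow> ('v, 'k::comm_ring_1) mpoly" where
  "edge_mon e = (\<Prod>v\<in>e. var v)"

definition edge_ideal :: "'v set set \<Rightarrow> ('v, 'k::comm_ring_1) mpoly set" where
  "edge_ideal E = ideal_gen (edge_mon ` E)"

definition sq_edge_ideal :: "'v set set \<Rightarrow> ('v, 'k::comm_ring_1) mpoly set" where
  "sq_edge_ideal E = ideal_gen {edge_mon e1 * edge_mon e2 | e1 e2. e1 \<in> E \<and> e2 \<in> E \<and> e1 \<inter> e2 = {}}"

definition nbrs :: "'v set set \<Rightarrow> 'v \<Rightarrow> 'v set" where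
  "nbrs E x = {y. {x, y} \<in> E}"

definition del_vertices :: "'v set set \<Rightarrow> 'v set \<Rightarrow> 'v set set" where
  "del_vertices E W = {e \<in> E. e \<inter> W = {}}"

end

theory Submission
  imports Defs
begin

text \<open>All ideals involved are generated by squarefree monomials \<open>x\<^sub>S = \<Prod>v\<in>S. x\<^sub>v\<close>
  (\<^const>\<open>edge_mon\<close> applied to arbitrary finite vertex sets), so membership is decided term by
  term: a polynomial lies in the ideal generated by the \<open>x\<^sub>S\<close>, \<open>S \<in> F\<close>, iff the support of each of
  its monomials contains some \<open>S \<in> F\<close>. Multiplying by \<open>x\<^sub>a x\<^sub>b\<close> adds \<open>a\<close> and \<open>b\<close> to every support,
  so the colon identity reduces to a statement about vertex sets: \<open>T \<union> {a, b}\<close> contains two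
  disjoint edges iff \<open>T\<close> contains an edge avoiding \<open>a, b\<close> or a pair \<open>{c, d}\<close> with \<open>c\<close> adjacent
  to \<open>a\<close> and \<open>d\<close> adjacent to \<open>b\<close>.\<close>

lemma ideal_gen_0: "0 \<in> ideal_gen S"
  unfolding ideal_gen_def by (intro CollectI exI[of _ "{}"]) simp

lemma ideal_gen_add:
  assumes "p \<in> ideal_gen S" "q \<in> ideal_gen S"
  shows "p + q \<in> ideal_gen S"
proof -
  obtain F c where F: "finite F" "F \<subseteq> S" "p = (\<Sum>f\<in>F. c f * f)"
    using assms(1) unfolding ideal_gen_def by blast
  obtain G d where G: "finite G" "G \<subseteq> S" "q = (\<Sum>f\<in>G. d f * f)"
    using assms(2) unfolding ideal_gen_def by blast
  define e where "e f = (if f \<in> F then c f else 0) + (if f \<in> G then d f else 0)" for f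
  have "(\<Sum>f\<in>F \<union> G. e f * f)
      = (\<Sum>f\<in>F \<union> G. if f \<in> F then c f * f else 0) + (\<Sum>f\<in>F \<union> G. if f \<in> G then d f * f else 0)"
    unfolding e_def sum.distrib[symmetric] by (rule sum.cong) (auto simp: distrib_right)
  also have "\<dots> = p + q"
    using F G by (simp add: sum.If_cases Int_absorb1)
  finally show ?thesis
    unfolding ideal_gen_def using F G by (intro CollectI exI[of _ "F \<union> G"] exI[of _ e]) simp
qed

lemma ideal_gen_mult:
  assumes "p \<in> ideal_gen S"
  shows "r * p \<in> ideal_gen S"
proof -
  obtain F c where F: "finite F" "F \<subseteq> S" "p = (\<Sum>f\<in>F. c f * f)"
    using assms unfolding ideal_gen_def by blast
  then have "r * p = (\<Sum>f\<in>F. (r * c f) * f)"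
    by (simp add: sum_distrib_left mult.assoc)
  then show ?thesis
    unfolding ideal_gen_def using F by (intro CollectI exI[of _ F] exI[of _ "\<lambda>f. r * c f"]) simp
qed

lemma ideal_gen_base: "g \<in> S \<Longrightarrow> g \<in> ideal_gen S"
  unfolding ideal_gen_def by (intro CollectI exI[of _ "{g}"] exI[of _ "\<lambda>_. 1"]) simp

lemma ideal_gen_sum: "(\<And>x. x \<in> A \<Longrightarrow> f x \<in> ideal_gen S) \<Longrightarrow> sum f A \<in> ideal_gen S"
  by (induction A rule: infinite_finite_induct) (simp_all add: ideal_gen_0 ideal_gen_add)

lemma poly_mapping_sum_single:
  "p = (\<Sum>t\<in>Poly_Mapping.keys p. Poly_Mapping.single t (Poly_Mapping.lookup p t))"
  by (rule poly_mapping_eqI) (simp add: lookup_sum lookup_single when_def in_keys_iff)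

lemma mem_monomial_ideal_iff:
  "p \<in> ideal_gen ((\<lambda>g. Poly_Mapping.single g (1::'k::comm_ring_1)) ` G)
     \<longleftrightarrow> (\<forall>t\<in>Poly_Mapping.keys p. \<exists>g\<in>G. \<exists>s. t = s + g)"
  (is "p \<in> ideal_gen ?M \<longleftrightarrow> _")
proof
  assume "p \<in> ideal_gen ?M"
  then obtain F c where F: "F \<subseteq> ?M" "p = (\<Sum>f\<in>F. c f * f)"
    unfolding ideal_gen_def by blast
  show "\<forall>t\<in>Poly_Mapping.keys p. \<exists>g\<in>G. \<exists>s. t = s + g"
  proof
    fix t assume "t \<in> Poly_Mapping.keys p"
    then have "t \<in> (\<Union>f\<in>F. Poly_Mapping.keys (c f * f))"
      unfolding F(2) by (rule subsetD[OF keys_sum])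
    then obtain f where f: "f \<in> F" "t \<in> Poly_Mapping.keys (c f * f)"
      by blast
    then obtain s g where "t = s + g" "g \<in> Poly_Mapping.keys f"
      using keys_mult[of "c f" f] by blast
    moreover have "Poly_Mapping.keys f \<subseteq> G"
      using F(1) f(1) by auto
    ultimately show "\<exists>g\<in>G. \<exists>s. t = s + g"
      by blast
  qed
next
  assume divisible: "\<forall>t\<in>Poly_Mapping.keys p. \<exists>g\<in>G. \<exists>s. t = s + g"
  have "Poly_Mapping.single t (Poly_Mapping.lookup p t) \<in> ideal_gen ?M"
    if "t \<in> Poly_Mapping.keys p" for t
  proof -
    have "\<exists>g\<in>G. \<exists>s. t = s + g"
      using divisible that by (rule bspec)
    then obtain g s where "g \<in> G" "t = s + g"
      by (elim bexE exE)
    then have "Poly_Mapping.single t (Poly_Mapping.lookup p t)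
        = Poly_Mapping.single s (Poly_Mapping.lookup p t) * Poly_Mapping.single g 1"
      by (simp add: mult_single)
    also have "\<dots> \<in> ideal_gen ?M"
      using \<open>g \<in> G\<close> by (intro ideal_gen_mult ideal_gen_base) simp
    finally show ?thesis .
  qed
  then have "(\<Sum>t\<in>Poly_Mapping.keys p. Poly_Mapping.single t (Poly_Mapping.lookup p t)) \<in> ideal_gen ?M"
    by (rule ideal_gen_sum)
  then show "p \<in> ideal_gen ?M"
    by (simp only: poly_mapping_sum_single[of p, symmetric])
qed

lemma keys_mult_single_one:
  "Poly_Mapping.keys ((p :: ('v, 'k::comm_ring_1) mpoly) * Poly_Mapping.single m 1)
     = (\<lambda>t. t + m) ` Poly_Mapping.keys p"
proof -
  have "Poly_Mapping.lookup (Poly_Mapping.single m 1 * p) (m + t) = Poly_Mapping.lookup p t" for t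
    by (simp add: lookup_mult lookup_single when_mult)
  then have "Poly_Mapping.lookup (p * Poly_Mapping.single m 1) (t + m) = Poly_Mapping.lookup p t" for t
    by (metis mult.commute add.commute)
  then show ?thesis
    using keys_mult[of p "Poly_Mapping.single m (1::'k)"] by (auto simp: in_keys_iff)
qed

definition squarefree_exp :: "'v set \<Rightarrow> ('v \<Rightarrow>\<^sub>0 nat)" where
  "squarefree_exp S = (\<Sum>v\<in>S. Poly_Mapping.single v 1)"

lemma lookup_squarefree_exp:
  "finite S \<Longrightarrow> Poly_Mapping.lookup (squarefree_exp S) v = (if v \<in> S then 1 else 0)"
  by (simp add: squarefree_exp_def lookup_sum lookup_single when_def)

lemma keys_squarefree_exp: "finite S \<Longrightarrow> Poly_Mapping.keys (squarefree_exp S) = S"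
  by (auto simp: in_keys_iff lookup_squarefree_exp split: if_splits)

lemma keys_add_nat:
  "Poly_Mapping.keys (s + t :: 'v \<Rightarrow>\<^sub>0 nat) = Poly_Mapping.keys s \<union> Poly_Mapping.keys t"
  by (auto simp: in_keys_iff lookup_add)

lemma edge_mon_eq_single:
  "finite S \<Longrightarrow> (edge_mon S :: ('v, 'k::comm_ring_1) mpoly) = Poly_Mapping.single (squarefree_exp S) 1"
  by (induction S rule: finite_induct) (simp_all add: edge_mon_def squarefree_exp_def var_def mult_single)

lemma add_squarefree_exp_iff:
  assumes "finite S"
  shows "(\<exists>s. t = s + squarefree_exp S) \<longleftrightarrow> S \<subseteq> Poly_Mapping.keys t"
proof
  assume "\<exists>s. t = s + squarefree_exp S"
  then show "S \<subseteq> Poly_Mapping.keys t"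
    using assms by (auto simp: keys_add_nat keys_squarefree_exp)
next
  assume "S \<subseteq> Poly_Mapping.keys t"
  then have "t = (t - squarefree_exp S) + squarefree_exp S"
    using assms by (intro poly_mapping_eqI) (auto simp: lookup_add lookup_minus lookup_squarefree_exp in_keys_iff)
  then show "\<exists>s. t = s + squarefree_exp S" ..
qed

lemma mem_squarefree_ideal_iff:
  assumes "\<forall>S\<in>F. finite S"
  shows "p \<in> ideal_gen (edge_mon ` F :: ('v, 'k::comm_ring_1) mpoly set)
           \<longleftrightarrow> (\<forall>t\<in>Poly_Mapping.keys p. \<exists>S\<in>F. S \<subseteq> Poly_Mapping.keys t)"
proof -
  have "(edge_mon ` F :: ('v, 'k) mpoly set) = (\<lambda>g. Poly_Mapping.single g 1) ` squarefree_exp ` F"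
    using assms by (simp add: image_image edge_mon_eq_single cong: image_cong)
  then show ?thesis
    using assms by (auto simp: mem_monomial_ideal_iff add_squarefree_exp_iff)
qed

lemma colon_squarefree_ideal:
  assumes "\<forall>S\<in>F. finite S" "\<forall>S\<in>F'. finite S" "finite M"
    and cover_iff: "\<And>T. (\<exists>S\<in>F. S \<subseteq> T \<union> M) \<longleftrightarrow> (\<exists>S\<in>F'. S \<subseteq> T)"
  shows "colon (ideal_gen (edge_mon ` F)) (edge_mon M :: ('v, 'k::comm_ring_1) mpoly)
           = ideal_gen (edge_mon ` F')"
proof -
  have "p * edge_mon M \<in> ideal_gen (edge_mon ` F) \<longleftrightarrow> p \<in> ideal_gen (edge_mon ` F')"
    for p :: "('v, 'k) mpoly"
    using assms(1,2) cover_iff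
    by (simp add: mem_squarefree_ideal_iff edge_mon_eq_single[OF \<open>finite M\<close>] keys_mult_single_one
          keys_add_nat keys_squarefree_exp[OF \<open>finite M\<close>])
  then show ?thesis
    unfolding colon_def by blast
qed

lemma simple_graph_finite_edge: "simple_graph E \<Longrightarrow> e \<in> E \<Longrightarrow> finite e"
  unfolding simple_graph_def by (simp add: card_ge_0_finite)

lemma simple_graph_edge_neq:
  assumes "simple_graph E" "{a, b} \<in> E"
  shows "a \<noteq> b"
proof
  assume "a = b"
  then have "card {a, b} = 1"
    by simp
  then show False
    using assms unfolding simple_graph_def by simp
qed

lemma simple_graph_edge_through:
  assumes "simple_graph E" "e \<in> E" "u \<in> e"
  obtains c where "c \<noteq> u" "e = {u, c}"
proof -
  have "card (e - {u}) = 1"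
    using assms unfolding simple_graph_def by (simp add: card_Diff_singleton)
  then obtain c where "e - {u} = {c}"
    by (rule card_1_singletonE)
  then show thesis
    using that \<open>u \<in> e\<close> by blast
qed

definition colon_edges :: "'v set set \<Rightarrow> 'v \<Rightarrow> 'v \<Rightarrow> 'v set set" where
  "colon_edges E a b = del_vertices E {a, b} \<union>
     {{c, d} | c d. c \<in> nbrs E a \<and> d \<in> nbrs E b \<and> c \<noteq> d \<and> c \<notin> {a, b} \<and> d \<notin> {a, b}}"

lemma simple_graph_colon_edges: "simple_graph E \<Longrightarrow> simple_graph (colon_edges E a b)"
  unfolding simple_graph_def colon_edges_def del_vertices_def by auto

lemma edge_mon_doubleton: "c \<noteq> d \<Longrightarrow> edge_mon {c, d} = var c * var d"
  by (simp add: edge_mon_def)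

lemma edge_mon_colon_edges:
  "(edge_mon ` colon_edges E a b :: ('v, 'k::comm_ring_1) mpoly set)
     = edge_mon ` del_vertices E {a, b} \<union>
       {var c * var d | c d. c \<in> nbrs E a \<and> d \<in> nbrs E b \<and> c \<noteq> d \<and> c \<notin> {a, b} \<and> d \<notin> {a, b}}"
proof -
  let ?P = "\<lambda>c d. c \<in> nbrs E a \<and> d \<in> nbrs E b \<and> c \<noteq> d \<and> c \<notin> {a, b} \<and> d \<notin> {a, b}"
  have "(edge_mon ` {{c, d} | c d. ?P c d} :: ('v, 'k) mpoly set)
      = edge_mon ` (\<lambda>(c, d). {c, d}) ` {(c, d). ?P c d}"
    by auto
  also have "\<dots> = (\<lambda>(c, d). var c * var d) ` {(c, d). ?P c d}"
    unfolding image_image by (rule image_cong) (auto simp: edge_mon_doubleton)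
  also have "\<dots> = {var c * var d | c d. ?P c d}"
    by auto
  finally show ?thesis
    unfolding colon_edges_def image_Un by simp
qed

lemma edge_mon_Un:
  "finite A \<Longrightarrow> finite B \<Longrightarrow> A \<inter> B = {} \<Longrightarrow> edge_mon (A \<union> B) = edge_mon A * edge_mon B"
  by (simp add: edge_mon_def prod.union_disjoint)

lemma sq_edge_ideal_eq_squarefree:
  assumes "simple_graph E"
  shows "(sq_edge_ideal E :: ('v, 'k::comm_ring_1) mpoly set)
           = ideal_gen (edge_mon ` {e1 \<union> e2 | e1 e2. e1 \<in> E \<and> e2 \<in> E \<and> e1 \<inter> e2 = {}})"
proof -
  let ?P = "\<lambda>e1 e2. e1 \<in> E \<and> e2 \<in> E \<and> e1 \<inter> e2 = {}"
  have "({edge_mon e1 * edge_mon e2 | e1 e2. ?P e1 e2} :: ('v, 'k) mpoly set)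
      = (\<lambda>(e1, e2). edge_mon e1 * edge_mon e2) ` {(e1, e2). ?P e1 e2}"
    by auto
  also have "\<dots> = edge_mon ` (\<lambda>(e1, e2). e1 \<union> e2) ` {(e1, e2). ?P e1 e2}"
    unfolding image_image
    by (rule image_cong) (auto simp: edge_mon_Un simple_graph_finite_edge[OF assms])
  also have "\<dots> = edge_mon ` {e1 \<union> e2 | e1 e2. ?P e1 e2}"
    by auto
  finally show ?thesis
    unfolding sq_edge_ideal_def by simp
qed

lemma disjoint_edges_cover_iff:
  assumes "simple_graph E" "{a, b} \<in> E"
  shows "(\<exists>e1\<in>E. \<exists>e2\<in>E. e1 \<inter> e2 = {} \<and> e1 \<union> e2 \<subseteq> T \<union> {a, b})
           \<longleftrightarrow> (\<exists>e\<in>colon_edges E a b. e \<subseteq> T)"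
proof
  assume "\<exists>e1\<in>E. \<exists>e2\<in>E. e1 \<inter> e2 = {} \<and> e1 \<union> e2 \<subseteq> T \<union> {a, b}"
  then obtain e1 e2 where e: "e1 \<in> E" "e2 \<in> E" "e1 \<inter> e2 = {}" "e1 \<union> e2 \<subseteq> T \<union> {a, b}"
    by blast
  show "\<exists>e\<in>colon_edges E a b. e \<subseteq> T"
  proof (cases "e1 \<inter> {a, b} = {} \<or> e2 \<inter> {a, b} = {}")
    case True
    then obtain e where "e \<in> E" "e \<inter> {a, b} = {}" "e \<subseteq> T \<union> {a, b}"
      using e by blast
    then have "e \<in> colon_edges E a b" "e \<subseteq> T"
      unfolding colon_edges_def del_vertices_def by blast+
    then show ?thesis ..
  next
    case False
    then obtain u w where uw: "u \<in> e1" "w \<in> e2" "u \<in> {a, b}" "w \<in> {a, b}"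
      by blast
    obtain c where c: "c \<noteq> u" "e1 = {u, c}"
      using simple_graph_edge_through[OF assms(1) e(1) uw(1)] .
    obtain d where d: "d \<noteq> w" "e2 = {w, d}"
      using simple_graph_edge_through[OF assms(1) e(2) uw(2)] .
    have "u \<noteq> w" "c \<noteq> w" "d \<noteq> u" "c \<noteq> d"
      using e(3) unfolding c(2) d(2) by auto
    then have ab: "{a, b} = {u, w}"
      using uw(3,4) by auto
    have "{c, d} \<in> colon_edges E a b"
    proof (cases "u = a")
      case True
      then have "c \<in> nbrs E a" "d \<in> nbrs E b"
        using ab e(1,2) \<open>u \<noteq> w\<close> unfolding c(2) d(2) nbrs_def by (auto simp: doubleton_eq_iff)
      then show ?thesis
        using ab c(1) d(1) \<open>c \<noteq> w\<close> \<open>d \<noteq> u\<close> \<open>c \<noteq> d\<close> unfolding colon_edges_def by blast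
    next
      case False
      then have "d \<in> nbrs E a" "c \<in> nbrs E b"
        using ab e(1,2) unfolding c(2) d(2) nbrs_def by (auto simp: doubleton_eq_iff)
      then have "{d, c} \<in> colon_edges E a b"
        using ab c(1) d(1) \<open>c \<noteq> w\<close> \<open>d \<noteq> u\<close> \<open>c \<noteq> d\<close> unfolding colon_edges_def by blast
      then show ?thesis
        by (simp add: insert_commute)
    qed
    moreover have "{c, d} \<subseteq> T"
      using e(4) ab c(1) d(1) \<open>c \<noteq> w\<close> \<open>d \<noteq> u\<close> unfolding c(2) d(2) by blast
    ultimately show ?thesis ..
  qed
next
  assume "\<exists>e\<in>colon_edges E a b. e \<subseteq> T"
  then obtain e where "e \<in> colon_edges E a b" "e \<subseteq> T"
    by blast
  then consider "e \<in> E" "e \<inter> {a, b} = {}"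
    | c d where "e = {c, d}" "{a, c} \<in> E" "{b, d} \<in> E" "c \<noteq> d" "c \<notin> {a, b}" "d \<notin> {a, b}"
    unfolding colon_edges_def del_vertices_def nbrs_def by auto
  then show "\<exists>e1\<in>E. \<exists>e2\<in>E. e1 \<inter> e2 = {} \<and> e1 \<union> e2 \<subseteq> T \<union> {a, b}"
  proof cases
    case 1
    then show ?thesis
      using assms(2) \<open>e \<subseteq> T\<close> by blast
  next
    case (2 c d)
    have "{a, c} \<inter> {b, d} = {}"
      using 2 simple_graph_edge_neq[OF assms] by auto
    then show ?thesis
      using 2 \<open>e \<subseteq> T\<close> by (intro bexI[of _ "{a, c}"] bexI[of _ "{b, d}"]) auto
  qed
qed

theorem lemma2p5:
  fixes E :: "('v::finite) set set" and a b :: 'v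
  assumes "simple_graph E" and "{a, b} \<in> E"
  shows "colon (sq_edge_ideal E :: ('v, 'k::field) mpoly set) (var a * var b) =
           ideal_gen (edge_mon ` del_vertices E {a, b} \<union>
             {var c * var d | c d. c \<in> nbrs E a \<and> d \<in> nbrs E b \<and> c \<noteq> d \<and>
                c \<notin> {a, b} \<and> d \<notin> {a, b}})
       \<and> (\<exists>E'. simple_graph E' \<and>
            colon (sq_edge_ideal E :: ('v, 'k) mpoly set) (var a * var b) = edge_ideal E')"
proof -
  let ?F = "{e1 \<union> e2 | e1 e2. e1 \<in> E \<and> e2 \<in> E \<and> e1 \<inter> e2 = {}}"
  have "var a * var b = (edge_mon {a, b} :: ('v, 'k) mpoly)"
    using simple_graph_edge_neq[OF assms] by (simp add: edge_mon_doubleton)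
  moreover have "colon (ideal_gen (edge_mon ` ?F)) (edge_mon {a, b} :: ('v, 'k) mpoly)
      = edge_ideal (colon_edges E a b)"
    unfolding edge_ideal_def
  proof (rule colon_squarefree_ideal)
    show "(\<exists>S\<in>?F. S \<subseteq> T \<union> {a, b}) \<longleftrightarrow> (\<exists>S\<in>colon_edges E a b. S \<subseteq> T)" for T
      using disjoint_edges_cover_iff[OF assms, of T] by blast
  qed simp_all
  ultimately have "colon (sq_edge_ideal E :: ('v, 'k) mpoly set) (var a * var b)
      = edge_ideal (colon_edges E a b)"
    by (simp only: sq_edge_ideal_eq_squarefree[OF assms(1)])
  then show ?thesis
    using simple_graph_colon_edges[OF assms(1)]
    by (intro conjI exI[of _ "colon_edges E a b"]) (simp_all add: edge_ideal_def edge_mon_colon_edges)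
qed

end
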